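(* Let $n\ge q\ge 2$ be integers and put $S_1=\sqrt{q^2+4(q-1)(n-2)}$. Let $d$ be an integer and define $j$ by $d=n-1-\frac{n-2+j}{q}$ (so $j=q(n-1-d)-n+2$), and assume $j\in\left[0,\frac{S_1-q}{2}\right)$. Put $s=1-\frac{2d}{n}$, $d_0=n-\frac{j(n-1)}{q(j+q-1)}$, let $e$ be the unique rational number in $(0,1]$ such that $d_0+e$ is an integer, and set $$a=\frac{(n-1)(q-1)(q+j)}{q+j-1}+eq,\quad D=(j+q-1)[2n(q-1)-q]+q,\quad E=-n(n-1)(q-1)^2(j+q).$$ Then $$A_q(n,s)\le \frac{a(a+q)dq}{a^2(2-q-j)+Da+E}.$$
   Context: $H(n,q)$ is the set of words of length $n$ over the alphabet $\{0,1,\dots,q-1\}$ with Hamming distance $d(x,y)$; the inner product is $\langle x,y\rangle=1-\frac{2d(x,y)}{n}$. For $s\in[-1,1)$, $A_q(n,s)$ is the maximum cardinality of a code $C\subset H(n,q)$ with $\langle x,y\rangle\le s$ for all distinct $x,y\in C$ (equivalently, minimum distance at least $n(1-s)/2$). *)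

theory Defs
  imports Complex_Main
begin

definition hamming_space :: "nat \<Rightarrow> nat \<Rightarrow> nat list set" where
  "hamming_space n q = {x. length x = n \<and> (\<forall>a\<in>set x. a < q)}"

definition hamming_dist :: "nat list \<Rightarrow> nat list \<Rightarrow> nat" where
  "hamming_dist x y = card {i. i < length x \<and> x ! i \<noteq> y ! i}"

definition ham_inner :: "nat \<Rightarrow> nat list \<Rightarrow> nat list \<Rightarrow> real" where
  "ham_inner n x y = 1 - 2 * real (hamming_dist x y) / real n"

definition is_code :: "nat \<Rightarrow> nat \<Rightarrow> real \<Rightarrow> nat list set \<Rightarrow> bool" where
  "is_code q n s C \<longleftrightarrow> C \<subseteq> hamming_space n q \<and>
     (\<forall>x\<in>C. \<forall>y\<in>C. x \<noteq> y \<longrightarrow> ham_inner n x y \<le> s)"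

definition A_code :: "nat \<Rightarrow> nat \<Rightarrow> real \<Rightarrow> nat" where
  "A_code q n s = Max {card C | C. is_code q n s C}"

end

theory Submission
  imports Defs
begin

text \<open>
  Delsarte's linear programming bound with a cubic polynomial. Let A(x,y) count the coordinates
  where x and y agree. The centered agreements c_i(x,y) = [x_i = y_i] - 1/q are Gram kernels
  (inner products of centered indicator vectors), hence so are their products, and the
  elementary symmetric sums E_1, E_2, E_3 of the c_i have nonnegative double sums over C x C;
  each E_k is a polynomial in A. Expand f(A) = (A - r)(A - u)(A - u - 1), with r = n - d and
  u an integer, as c_0 + c_1 E_1 + c_2 E_2 + E_3. If c_1, c_2 are nonnegative, summing over
  C x C gives |C|^2 c_0 <= sum f(A(x,y)) <= |C| f(n): off the diagonal A <= r, and
  (A - u)(A - u - 1) >= 0 since A and u are integers. The choice u = n - (a + q)/q, integral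
  because d_0 + e is, makes c_1, c_2 nonnegative and f(n)/c_0 equal to the stated bound.
\<close>

lemma double_sum_gram_nonneg:
  fixes \<phi> :: "'x \<Rightarrow> 't \<Rightarrow> real"
  assumes "finite C" "finite T"
    and gram: "\<And>x y. x \<in> C \<Longrightarrow> y \<in> C \<Longrightarrow> K x y = (\<Sum>t\<in>T. \<phi> x t * \<phi> y t)"
  shows "0 \<le> (\<Sum>x\<in>C. \<Sum>y\<in>C. K x y)"
proof -
  have "(\<Sum>x\<in>C. \<Sum>y\<in>C. K x y) = (\<Sum>x\<in>C. \<Sum>y\<in>C. \<Sum>t\<in>T. \<phi> x t * \<phi> y t)"
    by (simp add: gram)
  also have "\<dots> = (\<Sum>x\<in>C. \<Sum>t\<in>T. \<Sum>y\<in>C. \<phi> x t * \<phi> y t)"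
    by (intro sum.cong refl sum.swap)
  also have "\<dots> = (\<Sum>t\<in>T. (\<Sum>x\<in>C. \<phi> x t) * (\<Sum>y\<in>C. \<phi> y t))"
    by (subst sum.swap) (simp add: sum_product)
  also have "\<dots> \<ge> 0"
    by (intro sum_nonneg) simp
  finally show ?thesis .
qed

lemma gram_mult:
  fixes f :: "'x \<Rightarrow> 's \<Rightarrow> 'a::comm_semiring_0" and g :: "'x \<Rightarrow> 't \<Rightarrow> 'a"
  shows "(\<Sum>s\<in>S. f x s * f y s) * (\<Sum>t\<in>T. g x t * g y t) =
         (\<Sum>p\<in>S \<times> T. (f x (fst p) * g x (snd p)) * (f y (fst p) * g y (snd p)))"
  by (simp add: sum_product sum.cartesian_product' mult_ac)

lemma double_sum_sum_nonneg:
  fixes K :: "'i \<Rightarrow> 'x \<Rightarrow> 'x \<Rightarrow> real"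
  assumes "\<And>i. i \<in> I \<Longrightarrow> 0 \<le> (\<Sum>x\<in>C. \<Sum>y\<in>C. K i x y)"
  shows "0 \<le> (\<Sum>x\<in>C. \<Sum>y\<in>C. \<Sum>i\<in>I. K i x y)"
proof -
  have "(\<Sum>x\<in>C. \<Sum>y\<in>C. \<Sum>i\<in>I. K i x y) = (\<Sum>i\<in>I. \<Sum>x\<in>C. \<Sum>y\<in>C. K i x y)"
    by (subst sum.swap, subst (2) sum.swap) (rule refl)
  also have "\<dots> \<ge> 0" using assms by (simp add: sum_nonneg)
  finally show ?thesis .
qed

definition centered_indicator :: "nat \<Rightarrow> nat list \<Rightarrow> nat \<Rightarrow> nat \<Rightarrow> real" where
  "centered_indicator q x i a = of_bool (x ! i = a) - 1 / real q"

definition centered_agreement :: "nat \<Rightarrow> nat \<Rightarrow> nat list \<Rightarrow> nat list \<Rightarrow> real" where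
  "centered_agreement q i x y = of_bool (x ! i = y ! i) - 1 / real q"

lemma centered_agreement_gram:
  assumes "x ! i < q" "y ! i < q"
  shows "centered_agreement q i x y =
         (\<Sum>a<q. centered_indicator q x i a * centered_indicator q y i a)"
proof -
  have sum_ind: "(\<Sum>a<q. of_bool (b = a) * g a) = (g b :: real)" if "b < q" for b g
  proof -
    have "(\<Sum>a<q. of_bool (b = a) * g a) = (\<Sum>a<q. if b = a then g a else 0)"
      by (intro sum.cong) auto
    then show ?thesis using that by simp
  qed
  have "(\<Sum>a<q. centered_indicator q x i a * centered_indicator q y i a) =
        (\<Sum>a<q. of_bool (x ! i = a) * centered_indicator q y i a)
        - (\<Sum>a<q. centered_indicator q y i a) / real q"
    by (simp add: centered_indicator_def[of q x] left_diff_distrib sum_subtractf sum_divide_distrib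
        del: sum_mult_of_bool_eq)
  also have "(\<Sum>a<q. centered_indicator q y i a) = 0"
    using sum_ind[OF assms(2), of "\<lambda>_. 1"] assms(2)
    by (simp add: centered_indicator_def sum_subtractf del: sum_mult_of_bool_eq sum_of_bool_eq)
  also have "(\<Sum>a<q. of_bool (x ! i = a) * centered_indicator q y i a) =
             centered_indicator q y i (x ! i)"
    by (rule sum_ind[OF assms(1)])
  also have "centered_indicator q y i (x ! i) = centered_agreement q i x y"
    by (simp add: centered_agreement_def centered_indicator_def eq_commute)
  finally show ?thesis by simp
qed

lemma finite_hamming_space: "finite (hamming_space n q)"
proof (rule finite_subset)
  show "hamming_space n q \<subseteq> {xs. set xs \<subseteq> {..<q} \<and> length xs = n}"
    unfolding hamming_space_def by auto
qed (simp add: finite_lists_length_eq)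

lemma hamming_space_nth_less: "x \<in> hamming_space n q \<Longrightarrow> i < n \<Longrightarrow> x ! i < q"
  unfolding hamming_space_def by auto

lemma finite_subset_hamming_space: "C \<subseteq> hamming_space n q \<Longrightarrow> finite C"
  by (rule finite_subset[OF _ finite_hamming_space])

lemma centered_agreement_psd:
  assumes C: "C \<subseteq> hamming_space n q" and "i < n"
  shows "0 \<le> (\<Sum>x\<in>C. \<Sum>y\<in>C. centered_agreement q i x y)"
proof (rule double_sum_gram_nonneg[OF finite_subset_hamming_space[OF C] finite_lessThan])
  fix x y assume "x \<in> C" "y \<in> C"
  with assms have "x ! i < q" "y ! i < q" by (auto intro: hamming_space_nth_less)
  then show "centered_agreement q i x y =
      (\<Sum>a<q. centered_indicator q x i a * centered_indicator q y i a)"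
    by (rule centered_agreement_gram)
qed

lemma centered_agreement_pair_psd:
  assumes C: "C \<subseteq> hamming_space n q" and "i < n" "k < n"
  shows "0 \<le> (\<Sum>x\<in>C. \<Sum>y\<in>C. centered_agreement q i x y * centered_agreement q k x y)"
proof (rule double_sum_gram_nonneg[OF finite_subset_hamming_space[OF C], of "{..<q} \<times> {..<q}"])
  fix x y assume "x \<in> C" "y \<in> C"
  with assms have "x ! i < q" "y ! i < q" "x ! k < q" "y ! k < q"
    by (auto intro: hamming_space_nth_less)
  then show "centered_agreement q i x y * centered_agreement q k x y =
      (\<Sum>p\<in>{..<q} \<times> {..<q}.
        (centered_indicator q x i (fst p) * centered_indicator q x k (snd p)) *
        (centered_indicator q y i (fst p) * centered_indicator q y k (snd p)))"
    by (simp add: centered_agreement_gram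
        gram_mult[where f = "\<lambda>x a. centered_indicator q x i a" and x = x and y = y
          and g = "\<lambda>x a. centered_indicator q x k a"])
qed simp

lemma centered_agreement_triple_psd:
  assumes C: "C \<subseteq> hamming_space n q" and "i < n" "k < n" "l < n"
  shows "0 \<le> (\<Sum>x\<in>C. \<Sum>y\<in>C.
           centered_agreement q i x y * centered_agreement q k x y * centered_agreement q l x y)"
proof (rule double_sum_gram_nonneg[OF finite_subset_hamming_space[OF C],
      of "({..<q} \<times> {..<q}) \<times> {..<q}"])
  fix x y assume "x \<in> C" "y \<in> C"
  with assms have "x ! i < q" "y ! i < q" "x ! k < q" "y ! k < q" "x ! l < q" "y ! l < q"
    by (auto intro: hamming_space_nth_less)
  then show "centered_agreement q i x y * centered_agreement q k x y * centered_agreement q l x y =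
      (\<Sum>p\<in>({..<q} \<times> {..<q}) \<times> {..<q}.
        (centered_indicator q x i (fst (fst p)) * centered_indicator q x k (snd (fst p))
          * centered_indicator q x l (snd p)) *
        (centered_indicator q y i (fst (fst p)) * centered_indicator q y k (snd (fst p))
          * centered_indicator q y l (snd p)))"
    by (simp add: centered_agreement_gram
        gram_mult[where f = "\<lambda>x a. centered_indicator q x i a" and x = x and y = y
          and g = "\<lambda>x a. centered_indicator q x k a"]
        gram_mult[where f = "\<lambda>x p. centered_indicator q x i (fst p) * centered_indicator q x k (snd p)"
          and x = x and y = y and g = "\<lambda>x a. centered_indicator q x l a"])
qed simp

lemma sum_distinct_pairs_prod:
  fixes c :: "'i \<Rightarrow> 'a::comm_ring_1"
  assumes "finite I"
  shows "(\<Sum>i\<in>I. \<Sum>k\<in>I - {i}. c i * c k) = (\<Sum>i\<in>I. c i)^2 - (\<Sum>i\<in>I. c i^2)"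
proof -
  have "(\<Sum>i\<in>I. \<Sum>k\<in>I - {i}. c i * c k) = (\<Sum>i\<in>I. c i * ((\<Sum>k\<in>I. c k) - c i))"
    using assms by (intro sum.cong refl) (simp add: sum_distrib_left[symmetric] sum_diff1)
  also have "\<dots> = (\<Sum>i\<in>I. c i)^2 - (\<Sum>i\<in>I. c i^2)"
    by (simp add: algebra_simps sum_subtractf sum_distrib_right[symmetric] power2_eq_square)
  finally show ?thesis .
qed

lemma sum_distinct_triples_prod:
  fixes c :: "'i \<Rightarrow> 'a::comm_ring_1"
  assumes "finite I"
  shows "(\<Sum>i\<in>I. \<Sum>k\<in>I - {i}. \<Sum>l\<in>I - {i} - {k}. c i * c k * c l) =
     (\<Sum>i\<in>I. c i)^3 - 3 * (\<Sum>i\<in>I. c i) * (\<Sum>i\<in>I. c i^2) + 2 * (\<Sum>i\<in>I. c i^3)"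
proof -
  define S where "S = (\<Sum>i\<in>I. c i)"
  define S2 where "S2 = (\<Sum>i\<in>I. c i^2)"
  have "(\<Sum>i\<in>I. \<Sum>k\<in>I - {i}. \<Sum>l\<in>I - {i} - {k}. c i * c k * c l) =
        (\<Sum>i\<in>I. c i * ((S - c i)^2 - (S2 - c i^2)))"
  proof (rule sum.cong[OF refl])
    fix i assume "i \<in> I"
    have "(\<Sum>k\<in>I - {i}. \<Sum>l\<in>I - {i} - {k}. c i * c k * c l) =
          c i * (\<Sum>k\<in>I - {i}. \<Sum>l\<in>I - {i} - {k}. c k * c l)"
      by (simp add: sum_distrib_left mult.assoc)
    also have "(\<Sum>k\<in>I - {i}. \<Sum>l\<in>I - {i} - {k}. c k * c l) =
          (\<Sum>k\<in>I - {i}. c k)^2 - (\<Sum>k\<in>I - {i}. c k^2)"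
      using assms by (rule sum_distinct_pairs_prod[OF finite_Diff])
    also have "\<dots> = (S - c i)^2 - (S2 - c i^2)"
      using assms \<open>i \<in> I\<close> by (simp add: sum_diff1 S_def S2_def)
    finally show "(\<Sum>k\<in>I - {i}. \<Sum>l\<in>I - {i} - {k}. c i * c k * c l) =
        c i * ((S - c i)^2 - (S2 - c i^2))" .
  qed
  also have "\<dots> = (\<Sum>i\<in>I. S^2 * c i - 2 * S * c i^2 + 2 * c i^3 - S2 * c i)"
    by (rule sum.cong[OF refl]) (simp add: algebra_simps power2_eq_square power3_eq_cube)
  also have "\<dots> = S^2 * S - 2 * S * S2 + 2 * (\<Sum>i\<in>I. c i^3) - S2 * S"
    by (simp add: sum.distrib sum_subtractf sum_distrib_left[symmetric] S_def S2_def)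
  finally show ?thesis
    unfolding S_def S2_def by (simp add: power2_eq_square power3_eq_cube algebra_simps)
qed

definition agreements :: "nat \<Rightarrow> nat list \<Rightarrow> nat list \<Rightarrow> real" where
  "agreements n x y = (\<Sum>i<n. of_bool (x ! i = y ! i))"

lemma agreements_Ints: "agreements n x y \<in> \<int>"
  unfolding agreements_def by simp

lemma agreements_refl: "agreements n x x = real n"
  unfolding agreements_def by simp

lemma sum_centered_agreement:
  "(\<Sum>i<n. centered_agreement q i x y) = agreements n x y - real n / real q"
  by (simp add: centered_agreement_def agreements_def sum_subtractf)

lemma sum_centered_agreement_power2:
  assumes "0 < q"
  shows "(\<Sum>i<n. centered_agreement q i x y ^ 2) =
         (1 - 2 / real q) * agreements n x y + real n / real q ^ 2"
proof -
  have "centered_agreement q i x y ^ 2 =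
        (1 - 2 / real q) * of_bool (x ! i = y ! i) + 1 / real q ^ 2" for i
    using assms by (simp add: centered_agreement_def power2_eq_square field_simps)
  then show ?thesis
    by (simp add: agreements_def sum.distrib sum_distrib_left)
qed

lemma sum_centered_agreement_power3:
  assumes "0 < q"
  shows "(\<Sum>i<n. centered_agreement q i x y ^ 3) =
         ((1 - 1 / real q)^3 + 1 / real q ^ 3) * agreements n x y - real n / real q ^ 3"
proof -
  have "centered_agreement q i x y ^ 3 =
        ((1 - 1 / real q)^3 + 1 / real q ^ 3) * of_bool (x ! i = y ! i) - 1 / real q ^ 3" for i
    using assms by (simp add: centered_agreement_def power3_eq_cube field_simps)
  then show ?thesis
    by (simp add: agreements_def sum_subtractf sum_distrib_left)
qed

text \<open>
  Ordered elementary symmetric sums of the centered agreements; E_k is k!/q^k times the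
  Krawtchouk polynomial of degree k evaluated at the Hamming distance.
\<close>

definition esym1_kernel :: "nat \<Rightarrow> nat \<Rightarrow> nat list \<Rightarrow> nat list \<Rightarrow> real" where
  "esym1_kernel n q x y = (\<Sum>i<n. centered_agreement q i x y)"

definition esym2_kernel :: "nat \<Rightarrow> nat \<Rightarrow> nat list \<Rightarrow> nat list \<Rightarrow> real" where
  "esym2_kernel n q x y =
     (\<Sum>i<n. \<Sum>k\<in>{..<n} - {i}. centered_agreement q i x y * centered_agreement q k x y)"

definition esym3_kernel :: "nat \<Rightarrow> nat \<Rightarrow> nat list \<Rightarrow> nat list \<Rightarrow> real" where
  "esym3_kernel n q x y =
     (\<Sum>i<n. \<Sum>k\<in>{..<n} - {i}. \<Sum>l\<in>{..<n} - {i} - {k}.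
        centered_agreement q i x y * centered_agreement q k x y * centered_agreement q l x y)"

lemma esym1_kernel_psd:
  "C \<subseteq> hamming_space n q \<Longrightarrow> 0 \<le> (\<Sum>x\<in>C. \<Sum>y\<in>C. esym1_kernel n q x y)"
  unfolding esym1_kernel_def by (intro double_sum_sum_nonneg centered_agreement_psd) auto

lemma esym2_kernel_psd:
  "C \<subseteq> hamming_space n q \<Longrightarrow> 0 \<le> (\<Sum>x\<in>C. \<Sum>y\<in>C. esym2_kernel n q x y)"
  unfolding esym2_kernel_def
  by (intro double_sum_sum_nonneg centered_agreement_pair_psd) auto

lemma esym3_kernel_psd:
  "C \<subseteq> hamming_space n q \<Longrightarrow> 0 \<le> (\<Sum>x\<in>C. \<Sum>y\<in>C. esym3_kernel n q x y)"
  unfolding esym3_kernel_def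
  by (intro double_sum_sum_nonneg centered_agreement_triple_psd) auto

definition esym2_poly :: "real \<Rightarrow> real \<Rightarrow> real \<Rightarrow> real" where
  "esym2_poly N Q A = (A - N/Q)^2 - ((1 - 2/Q) * A + N/Q^2)"

definition esym3_poly :: "real \<Rightarrow> real \<Rightarrow> real \<Rightarrow> real" where
  "esym3_poly N Q A = (A - N/Q)^3 - 3 * (A - N/Q) * ((1 - 2/Q) * A + N/Q^2)
      + 2 * (((1 - 1/Q)^3 + 1/Q^3) * A - N/Q^3)"

lemma esym1_kernel_eq: "esym1_kernel n q x y = agreements n x y - real n / real q"
  unfolding esym1_kernel_def by (rule sum_centered_agreement)

lemma esym2_kernel_eq:
  "0 < q \<Longrightarrow> esym2_kernel n q x y = esym2_poly (real n) (real q) (agreements n x y)"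
  unfolding esym2_kernel_def esym2_poly_def
  by (simp add: sum_distinct_pairs_prod sum_centered_agreement sum_centered_agreement_power2)

lemma esym3_kernel_eq:
  "0 < q \<Longrightarrow> esym3_kernel n q x y = esym3_poly (real n) (real q) (agreements n x y)"
  unfolding esym3_kernel_def esym3_poly_def
  by (simp add: sum_distinct_triples_prod sum_centered_agreement sum_centered_agreement_power2
      sum_centered_agreement_power3)

definition lp_poly :: "real \<Rightarrow> real \<Rightarrow> real \<Rightarrow> real" where
  "lp_poly r u A = (A - r) * (A - u) * (A - u - 1)"

text \<open>The coefficients of lp_poly in the basis of lp_poly_expansion, solved from the
  coefficients of A^2, A and 1 in turn.\<close>

definition lp_coeff2 :: "real \<Rightarrow> real \<Rightarrow> real \<Rightarrow> real \<Rightarrow> real" where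
  "lp_coeff2 N Q r u = 3 * N / Q + 3 * (1 - 2 / Q) - (r + 2 * u + 1)"

definition lp_coeff1 :: "real \<Rightarrow> real \<Rightarrow> real \<Rightarrow> real \<Rightarrow> real" where
  "lp_coeff1 N Q r u = (r * (2 * u + 1) + u * (u + 1))
     - (3 * N^2 / Q^2 + 3 * (N / Q) * (1 - 2 / Q) - 3 * N / Q^2 + 2 * ((1 - 1 / Q)^3 + 1 / Q^3))
     + lp_coeff2 N Q r u * (2 * N / Q + (1 - 2 / Q))"

definition lp_coeff0 :: "real \<Rightarrow> real \<Rightarrow> real \<Rightarrow> real \<Rightarrow> real" where
  "lp_coeff0 N Q r u = - r * u * (u + 1) + N^3 / Q^3 - 3 * N^2 / Q^3 + 2 * N / Q^3
     - lp_coeff2 N Q r u * (N^2 / Q^2 - N / Q^2) + lp_coeff1 N Q r u * N / Q"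

lemma lp_poly_expansion:
  assumes "Q \<noteq> 0"
  shows "lp_poly r u A = lp_coeff0 N Q r u + lp_coeff1 N Q r u * (A - N / Q)
           + lp_coeff2 N Q r u * esym2_poly N Q A + esym3_poly N Q A"
  using assms
  unfolding lp_poly_def lp_coeff0_def lp_coeff1_def lp_coeff2_def esym2_poly_def esym3_poly_def
  by (simp add: field_simps power2_eq_square power3_eq_cube)

lemma lp_poly_nonpos:
  assumes "A \<le> r" "A \<in> \<int>" "u \<in> \<int>"
  shows "lp_poly r u A \<le> 0"
proof -
  obtain k :: int where k: "A - u = of_int k"
    using assms(2,3) by (metis Ints_cases Ints_diff)
  have "0 \<le> k * (k - 1)"
    by (cases "k \<le> 0") (auto intro: mult_nonpos_nonpos)
  then have "0 \<le> (A - u) * (A - u - 1)"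
    unfolding k by (metis of_int_0_le_iff of_int_1 of_int_diff of_int_mult)
  then show ?thesis
    using assms(1) unfolding lp_poly_def by (simp add: mult.assoc mult_nonpos_nonneg)
qed

lemma double_sum_lp_poly_ge:
  assumes C: "C \<subseteq> hamming_space n q" and "0 < q"
    and coeff1: "0 \<le> lp_coeff1 (real n) (real q) r u"
    and coeff2: "0 \<le> lp_coeff2 (real n) (real q) r u"
  shows "real (card C)^2 * lp_coeff0 (real n) (real q) r u \<le>
         (\<Sum>x\<in>C. \<Sum>y\<in>C. lp_poly r u (agreements n x y))"
proof -
  let ?c0 = "lp_coeff0 (real n) (real q) r u"
    and ?c1 = "lp_coeff1 (real n) (real q) r u"
    and ?c2 = "lp_coeff2 (real n) (real q) r u"
  have "lp_poly r u (agreements n x y) =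
        ?c0 + ?c1 * esym1_kernel n q x y + ?c2 * esym2_kernel n q x y + esym3_kernel n q x y" for x y
    using \<open>0 < q\<close> by (simp add: lp_poly_expansion esym1_kernel_eq esym2_kernel_eq esym3_kernel_eq)
  then have "(\<Sum>x\<in>C. \<Sum>y\<in>C. lp_poly r u (agreements n x y)) =
      real (card C)^2 * ?c0 + ?c1 * (\<Sum>x\<in>C. \<Sum>y\<in>C. esym1_kernel n q x y)
      + ?c2 * (\<Sum>x\<in>C. \<Sum>y\<in>C. esym2_kernel n q x y) + (\<Sum>x\<in>C. \<Sum>y\<in>C. esym3_kernel n q x y)"
    by (simp add: sum.distrib sum_distrib_left power2_eq_square)
  moreover have "0 \<le> ?c1 * (\<Sum>x\<in>C. \<Sum>y\<in>C. esym1_kernel n q x y)"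
    using coeff1 esym1_kernel_psd[OF C] by simp
  moreover have "0 \<le> ?c2 * (\<Sum>x\<in>C. \<Sum>y\<in>C. esym2_kernel n q x y)"
    using coeff2 esym2_kernel_psd[OF C] by simp
  ultimately show ?thesis
    using esym3_kernel_psd[OF C] by linarith
qed

lemma double_sum_lp_poly_le:
  assumes "finite C" and u: "u \<in> \<int>"
    and agree: "\<And>x y. x \<in> C \<Longrightarrow> y \<in> C \<Longrightarrow> x \<noteq> y \<Longrightarrow> agreements n x y \<le> r"
  shows "(\<Sum>x\<in>C. \<Sum>y\<in>C. lp_poly r u (agreements n x y)) \<le> real (card C) * lp_poly r u (real n)"
proof -
  have "(\<Sum>y\<in>C. lp_poly r u (agreements n x y)) \<le> lp_poly r u (real n)" if "x \<in> C" for x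
  proof -
    have "(\<Sum>y\<in>C - {x}. lp_poly r u (agreements n x y)) \<le> 0"
      using that agree u by (intro sum_nonpos lp_poly_nonpos agreements_Ints) auto
    then show ?thesis
      using \<open>finite C\<close> that by (simp add: sum.remove agreements_refl)
  qed
  then have "(\<Sum>x\<in>C. \<Sum>y\<in>C. lp_poly r u (agreements n x y)) \<le> (\<Sum>x\<in>C. lp_poly r u (real n))"
    by (rule sum_mono)
  then show ?thesis by simp
qed

lemma card_le_lp_bound:
  assumes C: "C \<subseteq> hamming_space n q" and "0 < q" and u: "u \<in> \<int>"
    and agree: "\<And>x y. x \<in> C \<Longrightarrow> y \<in> C \<Longrightarrow> x \<noteq> y \<Longrightarrow> agreements n x y \<le> r"
    and coeff0: "0 < lp_coeff0 (real n) (real q) r u"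
    and coeff1: "0 \<le> lp_coeff1 (real n) (real q) r u"
    and coeff2: "0 \<le> lp_coeff2 (real n) (real q) r u"
    and at_n: "0 \<le> lp_poly r u (real n)"
  shows "real (card C) \<le> lp_poly r u (real n) / lp_coeff0 (real n) (real q) r u"
proof (cases "C = {}")
  case False
  have "real (card C) * (real (card C) * lp_coeff0 (real n) (real q) r u) \<le>
        real (card C) * lp_poly r u (real n)"
    using double_sum_lp_poly_ge[OF C \<open>0 < q\<close> coeff1 coeff2]
      double_sum_lp_poly_le[OF finite_subset_hamming_space[OF C] u agree]
    by (simp add: power2_eq_square mult.assoc)
  moreover have "0 < card C"
    using False finite_subset_hamming_space[OF C] by (simp add: card_gt_0_iff)
  ultimately show ?thesis
    using coeff0 by (simp add: pos_le_divide_eq mult.commute)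
qed (use coeff0 at_n in simp)

lemma agreements_eq_hamming_dist:
  assumes "length x = n"
  shows "agreements n x y = real n - real (hamming_dist x y)"
proof -
  have "{i. i < length x \<and> x ! i \<noteq> y ! i} = {..<n} \<inter> {i. x ! i \<noteq> y ! i}"
    using assms by auto
  then have "real (hamming_dist x y) = (\<Sum>i<n. of_bool (x ! i \<noteq> y ! i))"
    by (simp add: hamming_dist_def)
  then show ?thesis
    by (simp add: agreements_def of_bool_not_iff sum_subtractf)
qed

lemma is_code_agreements_le:
  assumes "is_code q n s C" "x \<in> C" "y \<in> C" "x \<noteq> y" "0 < n"
  shows "agreements n x y \<le> real n * (1 + s) / 2"
proof -
  have "1 - 2 * real (hamming_dist x y) / real n \<le> s"
    using assms(1-4) by (auto simp: is_code_def ham_inner_def)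
  then have "real n * (1 - s) / 2 \<le> real (hamming_dist x y)"
    using \<open>0 < n\<close> by (simp add: field_simps)
  moreover have "length x = n"
    using assms(1,2) by (auto simp: is_code_def hamming_space_def)
  ultimately show ?thesis
    by (simp add: agreements_eq_hamming_dist field_simps)
qed

lemma A_code_le:
  assumes "\<And>C. is_code q n s C \<Longrightarrow> real (card C) \<le> B"
  shows "real (A_code q n s) \<le> B"
proof -
  let ?cards = "{card C | C. is_code q n s C}"
  have "?cards \<subseteq> {..card (hamming_space n q)}"
    using finite_hamming_space by (auto simp: is_code_def intro: card_mono)
  then have "finite ?cards"
    by (rule finite_subset) simp
  moreover have "is_code q n s {}"
    by (simp add: is_code_def)
  ultimately have "A_code q n s \<in> ?cards"
    unfolding A_code_def by (intro Max_in) auto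
  then show ?thesis
    using assms by auto
qed

text \<open>
  The parameters of the theorem; d_eq is the definition of j solved for d.
\<close>

locale lp_parameters =
  fixes N Q J e a d D E :: real
  assumes two_le_Q: "2 \<le> Q" and Q_le_N: "Q \<le> N" and J_nonneg: "0 \<le> J"
    and J_small: "J * (J + Q) < (Q - 1) * (N - 2)"
    and e_pos: "0 < e" and e_le_one: "e \<le> 1"
    and a_eq: "a = (N - 1) * (Q - 1) * (Q + J) / (Q + J - 1) + e * Q"
    and d_eq: "Q * d = Q * (N - 1) - N + 2 - J"
    and D_eq: "D = (J + Q - 1) * (2 * N * (Q - 1) - Q) + Q"
    and E_eq: "E = - N * (N - 1) * (Q - 1)^2 * (J + Q)"
begin

lemma J_le_J_mult_Q: "J \<le> J * Q"
proof -
  have "J * 1 \<le> J * Q"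
    using J_nonneg two_le_Q by (intro mult_left_mono) auto
  then show ?thesis by simp
qed

lemma N_le_N_mult_Q: "N \<le> N * Q"
proof -
  have "N * 1 \<le> N * Q"
    using two_le_Q Q_le_N by (intro mult_left_mono) auto
  then show ?thesis by simp
qed

lemma d_formula: "d = (Q * (N - 1) - N + 2 - J) / Q"
  using d_eq two_le_Q by (simp add: field_simps)

lemma d_pos: "0 < d"
proof -
  have "Q * d = N * Q - Q - N + 2 - J"
    using d_eq by (simp add: algebra_simps)
  moreover have "J * J + J * Q < N * Q - 2 * Q - N + 2"
    using J_small by (simp add: algebra_simps)
  moreover have "0 \<le> J * J"
    by simp
  ultimately have "0 < Q * d"
    using J_le_J_mult_Q two_le_Q by linarith
  then show ?thesis
    using two_le_Q by (simp add: zero_less_mult_iff)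
qed

lemma a_pos: "0 < a"
proof -
  have "0 \<le> (N - 1) * (Q - 1) * (Q + J) / (Q + J - 1)"
    using two_le_Q Q_le_N J_nonneg by simp
  moreover have "0 < e * Q"
    using e_pos two_le_Q by simp
  ultimately show ?thesis
    using a_eq by linarith
qed

lemma lp_poly_at_N:
  "lp_poly (N - d) (N - (a + Q) / Q) N = d * ((a + Q) / Q) * (a / Q)"
  using two_le_Q unfolding lp_poly_def by (simp add: field_simps)

lemma lp_coeff2_eq:
  "lp_coeff2 N Q (N - d) (N - (a + Q) / Q) = (2 * a - 2 * (N - 1) * (Q - 1) + Q - 2 - J) / Q"
  using two_le_Q unfolding lp_coeff2_def d_formula by (simp add: field_simps)

lemma lp_coeff1_eq:
  "lp_coeff1 N Q (N - d) (N - (a + Q) / Q) =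
     ((a - (N * (Q - 1) + J - Q / 2))^2 + ((Q - 1) * (3 * N - 2) - J^2 - J * (Q - 2) - Q^2 / 4)) / Q^2"
  using two_le_Q unfolding lp_coeff1_def lp_coeff2_def d_formula
  by (simp add: field_simps power2_eq_square power3_eq_cube)

lemma lp_coeff0_eq:
  "Q^3 * lp_coeff0 N Q (N - d) (N - (a + Q) / Q) = a^2 * (2 - Q - J) + D * a + E"
  using two_le_Q unfolding lp_coeff0_def lp_coeff1_def lp_coeff2_def d_formula D_eq E_eq
  by (simp add: field_simps power2_eq_square power3_eq_cube)

lemma lp_coeff2_nonneg: "0 \<le> lp_coeff2 N Q (N - d) (N - (a + Q) / Q)"
proof -
  define w where "w = Q + J - 1"
  have w_pos: "0 < w"
    using two_le_Q J_nonneg by (simp add: w_def)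
  have "w * (J + 2 - Q) = J^2 + J - (Q - 1) * (Q - 2)"
    by (simp add: w_def algebra_simps power2_eq_square)
  also have "\<dots> \<le> J * (J + Q)"
    using J_le_J_mult_Q two_le_Q mult_nonneg_nonneg[of "Q - 1" "Q - 2"]
    by (simp add: algebra_simps power2_eq_square)
  also have "\<dots> < 2 * ((N - 1) * (Q - 1))"
    using J_small N_le_N_mult_Q by (simp add: algebra_simps)
  finally have "J + 2 - Q < 2 * ((N - 1) * (Q - 1) / w)"
    using w_pos by (simp add: field_simps)
  moreover have "(N - 1) * (Q - 1) / w = a - e * Q - (N - 1) * (Q - 1)"
    using w_pos unfolding a_eq w_def by (simp add: field_simps)
  moreover have "0 < e * Q"
    using e_pos two_le_Q by simp
  ultimately have "0 \<le> 2 * a - 2 * (N - 1) * (Q - 1) + Q - 2 - J"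
    by linarith
  then show ?thesis
    using two_le_Q by (simp add: lp_coeff2_eq)
qed

lemma lp_coeff1_nonneg: "0 \<le> lp_coeff1 N Q (N - d) (N - (a + Q) / Q)"
proof -
  have "Q^2 \<le> 2 * N * (Q - 1)"
  proof -
    have "Q^2 \<le> N * Q"
      using two_le_Q Q_le_N by (simp add: power2_eq_square mult_right_mono)
    also have "\<dots> \<le> N * (2 * (Q - 1))"
      using two_le_Q Q_le_N by (intro mult_left_mono) auto
    finally show ?thesis
      by (simp add: algebra_simps)
  qed
  then have "0 < (Q - 1) * (3 * N - 2) - J^2 - J * (Q - 2) - Q^2 / 4"
    using J_small J_nonneg N_le_N_mult_Q by (simp add: algebra_simps power2_eq_square)
  then show ?thesis
    by (simp add: lp_coeff1_eq)
qed

lemma lp_denominator_pos: "0 < a^2 * (2 - Q - J) + D * a + E"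
proof -
  \<comment> \<open>At e = 0 the denominator factors as (w + 1) P K / w^2 with K > 0; raising a by
    t = e Q <= Q adds t (B - (w - 1) t), which is positive as well.\<close>
  define w where "w = Q + J - 1"
  define P where "P = (N - 1) * (Q - 1)"
  define K where "K = (Q - 1) * (N - 1) + Q * w - w^2"
  define B where "B = (w^2 * (Q - 2) + Q * w + 2 * P) / w"
  define den where "den x = x^2 * (2 - Q - J) + D * x + E" for x
  define t where "t = e * Q"
  have w_pos: "0 < w" and w_ge: "1 \<le> w"
    using two_le_Q J_nonneg by (simp_all add: w_def)
  have P_pos: "0 < P"
    using two_le_Q Q_le_N by (simp add: P_def)
  have t_pos: "0 < t" and t_le: "t \<le> Q"
    using e_pos e_le_one two_le_Q by (simp_all add: t_def)
  have J_eq: "J = w - Q + 1"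
    by (simp add: w_def)
  have a_split: "a = P * (w + 1) / w + t"
    unfolding a_eq t_def P_def w_def by (simp add: algebra_simps)
  have K_pos: "0 < K"
  proof -
    have "w * (w - Q) = J * (J + Q) - 2 * J - (Q - 1)"
      by (simp add: w_def algebra_simps power2_eq_square)
    then have "w * (w - Q) < (Q - 1) * (N - 1)"
      using J_small J_nonneg two_le_Q by (simp add: algebra_simps)
    then show ?thesis
      unfolding K_def by (simp add: algebra_simps power2_eq_square)
  qed
  have den_base: "den (P * (w + 1) / w) = (w + 1) * P * K / w^2"
    unfolding den_def K_def P_def D_eq E_eq J_eq using w_pos
    by (simp add: field_simps power2_eq_square)
  have den_shift: "den (P * (w + 1) / w + t) = den (P * (w + 1) / w) + t * (B - (w - 1) * t)"
    unfolding den_def B_def P_def D_eq J_eq using w_pos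
    by (simp add: field_simps power2_eq_square)
  have "w * ((w - 1) * t) \<le> w * ((w - 1) * Q)"
    using t_le w_ge w_pos by (intro mult_left_mono) auto
  moreover have "w * B - w * (w - 1) * Q = 2 * K"
    unfolding B_def K_def P_def using w_pos by (simp add: field_simps power2_eq_square)
  ultimately have "0 < w * (B - (w - 1) * t)"
    using K_pos by (simp add: algebra_simps)
  then have "0 < t * (B - (w - 1) * t)"
    using w_pos t_pos by (simp add: zero_less_mult_iff)
  moreover have "0 < (w + 1) * P * K / w^2"
    using w_pos P_pos K_pos by simp
  ultimately have "0 < den a"
    unfolding a_split den_shift den_base by simp
  then show ?thesis
    by (simp add: den_def)
qed

lemma lp_coeff0_pos: "0 < lp_coeff0 N Q (N - d) (N - (a + Q) / Q)"
proof -
  have "0 < Q^3 * lp_coeff0 N Q (N - d) (N - (a + Q) / Q)"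
    unfolding lp_coeff0_eq by (rule lp_denominator_pos)
  then show ?thesis
    using two_le_Q by (simp add: zero_less_mult_iff)
qed

lemma lp_poly_at_N_nonneg: "0 \<le> lp_poly (N - d) (N - (a + Q) / Q) N"
  using d_pos a_pos two_le_Q by (simp add: lp_poly_at_N)

lemma lp_bound_eq:
  "lp_poly (N - d) (N - (a + Q) / Q) N / lp_coeff0 N Q (N - d) (N - (a + Q) / Q) =
   a * (a + Q) * d * Q / (a^2 * (2 - Q - J) + D * a + E)"
proof -
  define den where "den = a^2 * (2 - Q - J) + D * a + E"
  have "den \<noteq> 0"
    using lp_denominator_pos by (simp add: den_def)
  have coeff0: "lp_coeff0 N Q (N - d) (N - (a + Q) / Q) = den / Q^3"
    using lp_coeff0_eq two_le_Q by (simp add: den_def field_simps)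
  show ?thesis
    unfolding coeff0 lp_poly_at_N den_def[symmetric] using \<open>den \<noteq> 0\<close> two_le_Q
    by (simp add: field_simps power3_eq_cube)
qed

lemma a_add_Q_div_Q_eq: "(a + Q) / Q = N - J * (N - 1) / (Q * (J + Q - 1)) + e"
proof -
  define w where "w = Q + J - 1"
  have "w \<noteq> 0"
    using two_le_Q J_nonneg by (simp add: w_def)
  moreover have J_eq: "J = w - Q + 1"
    by (simp add: w_def)
  ultimately show ?thesis
    using two_le_Q unfolding a_eq J_eq by (simp add: field_simps)
qed

lemma card_le_bound:
  assumes "N = real n" "Q = real q" and C: "C \<subseteq> hamming_space n q"
    and shift: "N - (a + Q) / Q \<in> \<int>"
    and agree: "\<And>x y. x \<in> C \<Longrightarrow> y \<in> C \<Longrightarrow> x \<noteq> y \<Longrightarrow> agreements n x y \<le> N - d"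
  shows "real (card C) \<le> a * (a + Q) * d * Q / (a^2 * (2 - Q - J) + D * a + E)"
  using card_le_lp_bound[OF C _ shift agree] assms(1,2) two_le_Q
    lp_coeff0_pos lp_coeff1_nonneg lp_coeff2_nonneg lp_poly_at_N_nonneg lp_bound_eq
  by simp

end

lemma mult_add_less_of_less_root:
  fixes x b c :: real
  assumes "0 \<le> x" "0 \<le> b" "x < (sqrt (b^2 + 4 * c) - b) / 2"
  shows "x * (x + b) < c"
proof -
  have "sqrt ((2 * x + b)^2) < sqrt (b^2 + 4 * c)"
    using assms by simp
  then have "(2 * x + b)^2 < b^2 + 4 * c"
    by (simp only: real_sqrt_less_iff)
  then show ?thesis
    by (simp add: algebra_simps power2_eq_square)
qed

theorem theorem2:
  fixes n q :: nat and d :: int and e :: real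
  defines "S1 \<equiv> sqrt (real q ^ 2 + 4 * (real q - 1) * (real n - 2))"
  defines "j \<equiv> int q * (int n - 1 - d) - int n + 2"
  defines "s \<equiv> 1 - 2 * real_of_int d / real n"
  defines "d0 \<equiv> real n - real_of_int j * (real n - 1) / (real q * (real_of_int j + real q - 1))"
  defines "a \<equiv> (real n - 1) * (real q - 1) * (real q + real_of_int j) / (real q + real_of_int j - 1)
               + e * real q"
  defines "D \<equiv> (real_of_int j + real q - 1) * (2 * real n * (real q - 1) - real q) + real q"
  defines "E \<equiv> - real n * (real n - 1) * (real q - 1) ^ 2 * (real_of_int j + real q)"
  assumes "2 \<le> q" and "q \<le> n"
  assumes "0 \<le> j" and "real_of_int j < (S1 - real q) / 2"
  assumes "0 < e" and "e \<le> 1" and "d0 + e \<in> \<int>"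
  shows "real (A_code q n s) \<le>
         a * (a + real q) * real_of_int d * real q /
         (a ^ 2 * (2 - real q - real_of_int j) + D * a + E)"
proof -
  have "real_of_int j < (sqrt (real q ^ 2 + 4 * ((real q - 1) * (real n - 2))) - real q) / 2"
    using assms(11) unfolding S1_def by (simp only: mult.assoc)
  then have "real_of_int j * (real_of_int j + real q) < (real q - 1) * (real n - 2)"
    using assms(10) by (intro mult_add_less_of_less_root) simp_all
  moreover have "real q * real_of_int d = real q * (real n - 1) - real n + 2 - real_of_int j"
    by (simp add: j_def algebra_simps)
  ultimately interpret lp_parameters "real n" "real q" "real_of_int j" e a "real_of_int d" D E
    by unfold_locales (use assms(8-13) in \<open>simp_all add: a_def D_def E_def\<close>)
  have "real n - (a + real q) / real q = real n - (d0 + e)"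
    by (simp add: a_add_Q_div_Q_eq d0_def)
  then have shift: "real n - (a + real q) / real q \<in> \<int>"
    using assms(14) by (simp only: Ints_diff Ints_of_nat)
  have "real n * (1 + s) / 2 = real n - real_of_int d"
    using assms(8,9) by (simp add: s_def field_simps)
  then have agree: "agreements n x y \<le> real n - real_of_int d"
    if "is_code q n s C" "x \<in> C" "y \<in> C" "x \<noteq> y" for C x y
    using is_code_agreements_le[OF that] assms(8,9) by simp
  show ?thesis
    using shift agree by (intro A_code_le card_le_bound[OF refl refl]) (auto simp: is_code_def)
qed

end
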